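(* Let $K\subset S^3$ be a knot and $\mathbb{I}$ a sequence of $m$ crossing changes turning $K$ into the unknot. Let $\mathfrak{f}^+_\mathbb{I}:\mathbb{H}(K)\to\mathbb{A}$ and $\mathfrak{f}^-_\mathbb{I}:\mathbb{A}\to\mathbb{H}(K)$ be the homogeneous $\mathbb{A}$-module maps induced on homology by composing the crossing-change chain maps along $\mathbb{I}$, so that $\mathfrak{f}^-_\mathbb{I}\circ\mathfrak{f}^+_\mathbb{I}$ and $\mathfrak{f}^+_\mathbb{I}\circ\mathfrak{f}^-_\mathbb{I}$ are multiplication by $\mathsf{w}^{m}$. Then the composition $\mathbb{A}\to\mathbb{A}(K)$ of $\mathfrak{f}^-_\mathbb{I}$ with the projection $\mathbb{H}(K)\to\mathbb{A}(K)$ is injective; the restriction of $\mathfrak{f}^+_\mathbb{I}$ to $\mathbb{T}(K)$ is zero, so $\mathfrak{f}^+_\mathbb{I}$ induces a map $\mathfrak{f}^+:\mathbb{A}(K)\to\mathbb{A}$, which is injective; and these induced maps are homogeneous with respect to the Alexander grading.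
   Context: Work over $\mathbb{F}=\mathbb{Z}/2$, $\mathbb{A}=\mathbb{F}[\mathsf{u},\mathsf{w}]$. $\mathrm{CF}(K)$ is the knot Floer chain complex of $K$ over $\mathbb{A}$ (equivalent to $CFK^\infty$), with Alexander grading $A(\mathsf{u}^a\mathsf{w}^bx)=A(x)-a+b$; $\mathrm{CF}(\text{unknot})\simeq\mathbb{A}$. $\mathbb{H}(K)$ is its homology, $\mathbb{T}(K)=\{x\in\mathbb{H}(K): ax=0\text{ for some }0\ne a\in\mathbb{A}\}$, and $\mathbb{A}(K)=\mathbb{H}(K)/\mathbb{T}(K)$. For each crossing change from a knot $J$ to $J'$ there are homogeneous chain maps $\mathrm{CF}(J)\to\mathrm{CF}(J')$ and $\mathrm{CF}(J')\to\mathrm{CF}(J)$ whose compositions in either order are chain homotopic to multiplication by $\mathsf{w}$; composing these along $\mathbb{I}$ yields the maps above. *)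

theory Defs
  imports "HOL-Library.Z2" "HOL-Computational_Algebra.Polynomial"
begin

text \<open>The ring A = F[u,w] over F = Z/2, modelled as bivariate polynomials:
  outer variable w, inner variable u.  The monomial u^a w^b is the element with
  coeff (coeff p b) a = 1.\<close>

type_synonym Aring = "bit poly poly"

definition uA :: Aring where "uA = [:[:0, 1:]:]"
definition wA :: Aring where "wA = monom 1 1"

definition A_deg :: "int \<Rightarrow> Aring set" where
  "A_deg k = {p. \<forall>a b. coeff (coeff p b) a \<noteq> 0 \<longrightarrow> int b - int a = k}"

definition graded_A_module :: "(Aring \<Rightarrow> 'h::ab_group_add \<Rightarrow> 'h) \<Rightarrow> (int \<Rightarrow> 'h set) \<Rightarrow> bool" where
  "graded_A_module sm Hd \<longleftrightarrow> module sm \<and>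
     (\<forall>k. 0 \<in> Hd k \<and> (\<forall>x\<in>Hd k. \<forall>y\<in>Hd k. x + y \<in> Hd k)) \<and>
     (\<forall>j k p x. p \<in> A_deg j \<longrightarrow> x \<in> Hd k \<longrightarrow> sm p x \<in> Hd (j + k) ) \<and>
     (\<forall>x. \<exists>S c. finite S \<and> (\<forall>k\<in>S. c k \<in> Hd k) \<and> x = (\<Sum>k\<in>S. c k)) \<and>
     (\<forall>S c. finite S \<longrightarrow> (\<forall>k\<in>S. c k \<in> Hd k) \<longrightarrow> (\<Sum>k\<in>S. c k) = 0 \<longrightarrow> (\<forall>k\<in>S. c k = 0))"

definition torsion :: "(Aring \<Rightarrow> 'h::ab_group_add \<Rightarrow> 'h) \<Rightarrow> 'h set" where
  "torsion sm = {x. \<exists>a. a \<noteq> 0 \<and> sm a x = 0}"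

text \<open>A(K) = H/T, represented by the quotient map into equivalence classes.\<close>
definition quot_T :: "(Aring \<Rightarrow> 'h::ab_group_add \<Rightarrow> 'h) \<Rightarrow> 'h \<Rightarrow> 'h set" where
  "quot_T sm x = {y. y - x \<in> torsion sm}"

definition quot_deg :: "(Aring \<Rightarrow> 'h::ab_group_add \<Rightarrow> 'h) \<Rightarrow> (int \<Rightarrow> 'h set) \<Rightarrow> int \<Rightarrow> 'h set set" where
  "quot_deg sm Hd k = quot_T sm ` Hd k"

end

theory Submission
  imports Defs
begin

text \<open>Since A = F[u,w] is an integral domain, it is torsion-free, so every A-linear
  map H(K) \<rightarrow> A kills the torsion submodule and factors through the quotient by
  torsion. Multiplication by the nonzero element w^m is injective on A, and its kernel
  on H(K) is torsion; as both composites are multiplication by w^m, the maps induced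
  between A and the quotient are injective.\<close>

lemma wA_power_nonzero [simp]: "wA ^ m \<noteq> 0"
  by (simp add: wA_def)

lemma torsion_subspace:
  assumes "module sm"
  shows "module.subspace sm (torsion sm)"
proof -
  interpret module sm by (fact assms)
  have "0 \<in> torsion sm" unfolding torsion_def by (auto intro!: exI[of _ 1])
  moreover have "x + y \<in> torsion sm" if x: "x \<in> torsion sm" and y: "y \<in> torsion sm" for x y
  proof -
    obtain a where "a \<noteq> 0" "sm a x = 0" using x unfolding torsion_def by blast
    obtain b where "b \<noteq> 0" "sm b y = 0" using y unfolding torsion_def by blast
    have "sm (a * b) (x + y) = sm b (sm a x) + sm a (sm b y)"
      by (simp add: scale_right_distrib mult.commute)
    also have "\<dots> = 0" using \<open>sm a x = 0\<close> \<open>sm b y = 0\<close> by simp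
    finally show ?thesis using \<open>a \<noteq> 0\<close> \<open>b \<noteq> 0\<close> unfolding torsion_def
      by (auto intro!: exI[of _ "a * b"])
  qed
  moreover have "sm c x \<in> torsion sm" if x: "x \<in> torsion sm" for c x
  proof -
    obtain a where "a \<noteq> 0" "sm a x = 0" using x unfolding torsion_def by blast
    then have "sm a (sm c x) = 0" by (metis scale_left_commute scale_zero_right)
    with \<open>a \<noteq> 0\<close> show ?thesis unfolding torsion_def by auto
  qed
  ultimately show ?thesis unfolding subspace_def by blast
qed

lemma quot_T_eq_iff:
  assumes "module sm"
  shows "quot_T sm x = quot_T sm y \<longleftrightarrow> x - y \<in> torsion sm"
proof -
  interpret module sm by (fact assms)
  note T = torsion_subspace[OF assms]
  show ?thesis
  proof
    assume "quot_T sm x = quot_T sm y"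
    moreover have "x \<in> quot_T sm x" unfolding quot_T_def using subspace_0[OF T] by simp
    ultimately show "x - y \<in> torsion sm" unfolding quot_T_def by blast
  next
    assume xy: "x - y \<in> torsion sm"
    have "z - x \<in> torsion sm \<longleftrightarrow> z - y \<in> torsion sm" for z
      using subspace_add[OF T _ xy, of "z - x"] subspace_diff[OF T _ xy, of "z - y"] by auto
    then show "quot_T sm x = quot_T sm y" unfolding quot_T_def by blast
  qed
qed

lemma module_hom_torsion_eq_0:
  assumes "module_hom sm (*) f" and "x \<in> torsion sm"
  shows "f x = 0"
proof -
  interpret module_hom sm "(*)" f by (fact assms(1))
  obtain a where "a \<noteq> 0" "sm a x = 0" using assms(2) unfolding torsion_def by blast
  moreover from \<open>sm a x = 0\<close> have "a * f x = 0" by (metis scale zero)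
  ultimately show ?thesis by simp
qed

definition quot_lift :: "(Aring \<Rightarrow> 'h::ab_group_add \<Rightarrow> 'h) \<Rightarrow> ('h \<Rightarrow> 'b) \<Rightarrow> 'h set \<Rightarrow> 'b" where
  "quot_lift sm f X = f (SOME x. quot_T sm x = X)"

lemma quot_lift_quot_T:
  assumes "module_hom sm (*) f"
  shows "quot_lift sm f (quot_T sm x) = f x"
proof -
  interpret module_hom sm "(*)" f by (fact assms)
  define x' where "x' = (SOME x'. quot_T sm x' = quot_T sm x)"
  have "quot_T sm x' = quot_T sm x" unfolding x'_def by (rule someI) simp
  then have "x' - x \<in> torsion sm" using quot_T_eq_iff m1.module_axioms by blast
  then have "f x' - f x = 0" using module_hom_torsion_eq_0[OF assms] diff by metis
  then show ?thesis unfolding quot_lift_def x'_def by simp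
qed

lemma inj_quot_T_comp:
  assumes f: "module_hom sm (*) f" and g: "module_hom (*) sm g"
    and fg: "\<And>a. f (g a) = c * a" and "c \<noteq> 0"
  shows "inj (\<lambda>a. quot_T sm (g a))"
proof (rule injI)
  interpret g: module_hom "(*)" sm g by (fact g)
  fix a b assume "quot_T sm (g a) = quot_T sm (g b)"
  then have "g (a - b) \<in> torsion sm" using quot_T_eq_iff g.m2.module_axioms g.diff by metis
  then have "c * (a - b) = 0" using module_hom_torsion_eq_0[OF f] fg by metis
  with \<open>c \<noteq> 0\<close> show "a = b" by simp
qed

lemma inj_on_quot_lift:
  assumes f: "module_hom sm (*) f" and g: "module_hom (*) sm g"
    and gf: "\<And>x. g (f x) = sm c x" and "c \<noteq> 0"
  shows "inj_on (quot_lift sm f) (range (quot_T sm))"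
proof (rule inj_onI)
  interpret f: module_hom sm "(*)" f by (fact f)
  interpret g: module_hom "(*)" sm g by (fact g)
  fix X Y assume "X \<in> range (quot_T sm)" "Y \<in> range (quot_T sm)"
    and "quot_lift sm f X = quot_lift sm f Y"
  then obtain x y where X: "X = quot_T sm x" and Y: "Y = quot_T sm y" and "f x = f y"
    by (auto simp: quot_lift_quot_T[OF f])
  then have "f (x - y) = 0" by (simp add: f.diff)
  then have "sm c (x - y) = 0" using gf g.zero by metis
  with \<open>c \<noteq> 0\<close> have "x - y \<in> torsion sm" unfolding torsion_def by blast
  then show "X = Y" unfolding X Y using quot_T_eq_iff f.m1.module_axioms by blast
qed

theorem lemma3p4:
  fixes sm :: "Aring \<Rightarrow> 'h::ab_group_add \<Rightarrow> 'h"
    and Hd :: "int \<Rightarrow> 'h set"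
    and fplus :: "'h \<Rightarrow> Aring" and fminus :: "Aring \<Rightarrow> 'h"
    and m :: nat and cp cm :: int
  assumes graded: "graded_A_module sm Hd"
    and hom_plus: "module_hom sm (*) fplus"
    and hom_minus: "module_hom (*) sm fminus"
    and homog_plus: "\<And>k x. x \<in> Hd k \<Longrightarrow> fplus x \<in> A_deg (k + cp)"
    and homog_minus: "\<And>k a. a \<in> A_deg k \<Longrightarrow> fminus a \<in> Hd (k + cm)"
    and comp1: "\<And>x. fminus (fplus x) = sm (wA ^ m) x"
    and comp2: "\<And>a. fplus (fminus a) = wA ^ m * a"
  shows "inj (\<lambda>a. quot_T sm (fminus a))
       \<and> (\<forall>x \<in> torsion sm. fplus x = 0)
       \<and> (\<exists>fbar :: 'h set \<Rightarrow> Aring.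
            (\<forall>x. fbar (quot_T sm x) = fplus x)
          \<and> inj_on fbar (range (quot_T sm))
          \<and> (\<forall>k. \<forall>X \<in> quot_deg sm Hd k. fbar X \<in> A_deg (k + cp)))
       \<and> (\<forall>k a. a \<in> A_deg k \<longrightarrow> quot_T sm (fminus a) \<in> quot_deg sm Hd (k + cm))"
proof -
  have lift: "\<forall>x. quot_lift sm fplus (quot_T sm x) = fplus x"
    using quot_lift_quot_T[OF hom_plus] by blast
  have "\<forall>k. \<forall>X \<in> quot_deg sm Hd k. quot_lift sm fplus X \<in> A_deg (k + cp)"
    unfolding quot_deg_def using lift homog_plus by auto
  moreover have "inj_on (quot_lift sm fplus) (range (quot_T sm))"
    by (fact inj_on_quot_lift[OF hom_plus hom_minus comp1 wA_power_nonzero])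
  moreover have "inj (\<lambda>a. quot_T sm (fminus a))"
    by (fact inj_quot_T_comp[OF hom_plus hom_minus comp2 wA_power_nonzero])
  moreover have "\<forall>x \<in> torsion sm. fplus x = 0"
    using module_hom_torsion_eq_0[OF hom_plus] by blast
  moreover have "\<forall>k a. a \<in> A_deg k \<longrightarrow> quot_T sm (fminus a) \<in> quot_deg sm Hd (k + cm)"
    unfolding quot_deg_def using homog_minus by blast
  ultimately show ?thesis using lift by blast
qed

end
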